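(* Let $N, M$ be positive integers, let $\mathbf{a} \in \mathbb{C}^{N}$ and $\mathbf{B} \in \mathbb{C}^{N \times M}$ be constants. For diagonal matrices $\mathbf{Z}_1,\mathbf{Z}_2 \in \mathbb{C}^{N\times N}$ and vectors $\mathbf{z}_3,\mathbf{z}_4 \in \mathbb{C}^M$ define \[ \begin{aligned} \Lambda_{\mathbf{a},\mathbf{B}}(\mathbf{Z}_1,\mathbf{Z}_2,\mathbf{z}_3,\mathbf{z}_4) \triangleq\ & \tfrac14\big\|\mathrm{diag}(\mathbf{Z}_1^* ) + \mathrm{diag}(\mathbf{a})\mathbf{B}\mathbf{z}_3\big\|_2^2 \\ & - \tfrac12\Re\Big\{\big(\mathrm{diag}(\mathbf{Z}_2^* ) - \mathrm{diag}(\mathbf{a})\mathbf{B}\mathbf{z}_4\big)^{\mathsf H}\big(\mathrm{diag}(\mathbf{Z}_1^* ) - \mathrm{diag}(\mathbf{a})\mathbf{B}\mathbf{z}_3\big)\Big\} \\ & + \tfrac14\big\|\mathrm{diag}(\mathbf{Z}_2^* ) - \mathrm{diag}(\mathbf{a})\mathbf{B}\mathbf{z}_4\big\|_2^2 . \end{aligned} \] Fix a diagonal matrix $\mathbf{X}_0 \in \mathbb{C}^{N\times N}$ and a vector $\mathbf{y}_0 \in \mathbb{C}^M$. Let $\mathbf{X} \in \mathbb{C}^{N\times N}$ be diagonal, $\mathbf{y} \in \mathbb{C}^M$, and let $\rho,\kappa \in \mathbb{R}$ satisfy \[ \rho \ge \Lambda_{\mathbf{a},\mathbf{B}}(\mathbf{X},\mathbf{X}_0,\mathbf{y},\mathbf{y}_0),\quad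 \rho \ge \Lambda_{\mathbf{a},\mathbf{B}}(\mathbf{X},\mathbf{X}_0,-\mathbf{y},-\mathbf{y}_0), \] \[ \kappa \ge \Lambda_{\mathbf{a},\mathbf{B}}(\mathbf{X},\mathbf{X}_0,j\mathbf{y},j\mathbf{y}_0),\quad \kappa \ge \Lambda_{\mathbf{a},\mathbf{B}}(\mathbf{X},\mathbf{X}_0,-j\mathbf{y},-j\mathbf{y}_0). \] Then \[ |\mathbf{a}^{\mathsf T}\mathbf{X}\mathbf{B}\mathbf{y}|^2 \le \rho^2 + \kappa^2 . \] Moreover, each of the four functions $(\mathbf{X},\mathbf{y}) \mapsto \Lambda_{\mathbf{a},\mathbf{B}}(\mathbf{X},\mathbf{X}_0,\pm\mathbf{y},\pm\mathbf{y}_0)$, $(\mathbf{X},\mathbf{y}) \mapsto \Lambda_{\mathbf{a},\mathbf{B}}(\mathbf{X},\mathbf{X}_0,\pm j\mathbf{y},\pm j\mathbf{y}_0)$ is jointly convex in $(\mathbf{X},\mathbf{y})$ (as a real-valued function of the real and imaginary parts of the diagonal entries of $\mathbf{X}$ and the entries of $\mathbf{y}$), so the upper bound $\rho^2+\kappa^2$ together with these constraints is convex.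
   Context: $j=\sqrt{-1}$. $(\cdot)^*$ denotes entrywise complex conjugation, $(\cdot)^{\mathsf T}$ transpose, $(\cdot)^{\mathsf H}$ conjugate transpose, $\|\cdot\|_2$ the Euclidean norm, $\Re\{\cdot\}$ the real part, $|\cdot|$ the modulus. For a vector $\mathbf{v}$, $\mathrm{diag}(\mathbf{v})$ is the diagonal matrix with $\mathbf{v}$ on its diagonal; for a diagonal matrix $\mathbf{Z}$, $\mathrm{diag}(\mathbf{Z})$ is the vector of its diagonal entries, and $\mathrm{diag}(\mathbf{Z}^* )$ is the entrywise conjugate of that vector. *)

theory Defs
  imports "HOL-Analysis.Analysis"
begin

definition is_diag :: "complex ^ 'n ^ 'n \<Rightarrow> bool" where
  "is_diag Z \<longleftrightarrow> (\<forall>i j. i \<noteq> j \<longrightarrow> Z $ i $ j = 0)"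

definition diag_conj :: "complex ^ 'n ^ 'n \<Rightarrow> complex ^ 'n" where
  "diag_conj Z = (\<chi> i. cnj (Z $ i $ i))"

definition diagB :: "complex ^ 'n \<Rightarrow> complex ^ 'm ^ 'n \<Rightarrow> complex ^ 'm \<Rightarrow> complex ^ 'n" where
  "diagB a B z = (\<chi> i. a $ i * (B *v z) $ i)"

definition herm_inner :: "complex ^ 'n \<Rightarrow> complex ^ 'n \<Rightarrow> complex" where
  "herm_inner u v = (\<Sum>i\<in>UNIV. cnj (u $ i) * v $ i)"

definition Lambda ::
  "complex ^ 'n \<Rightarrow> complex ^ 'm ^ 'n \<Rightarrow> complex ^ 'n ^ 'n \<Rightarrow> complex ^ 'n ^ 'n
     \<Rightarrow> complex ^ 'm \<Rightarrow> complex ^ 'm \<Rightarrow> real" where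
  "Lambda a B Z1 Z2 z3 z4 =
     (1/4) * (norm (diag_conj Z1 + diagB a B z3))\<^sup>2
     - (1/2) * Re (herm_inner (diag_conj Z2 - diagB a B z4) (diag_conj Z1 - diagB a B z3))
     + (1/4) * (norm (diag_conj Z2 - diagB a B z4))\<^sup>2"

definition aXBy :: "complex ^ 'n \<Rightarrow> complex ^ 'n ^ 'n \<Rightarrow> complex ^ 'm ^ 'n \<Rightarrow> complex ^ 'm \<Rightarrow> complex" where
  "aXBy a X B y = (\<Sum>i\<in>UNIV. a $ i * ((X ** B) *v y) $ i)"

end

theory Submission
  imports Defs
begin

text \<open>
  Completing the square gives
  \<open>\<Lambda>(Z\<^sub>1, Z\<^sub>2, z\<^sub>3, z\<^sub>4) = Re (p\<^sup>H q) + \<parallel>p - q - r\<parallel>\<^sup>2 / 4\<close>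
  with \<open>p = diag(Z\<^sub>1\<^sup>*)\<close>, \<open>q = diag(a) B z\<^sub>3\<close> and \<open>r = diag(Z\<^sub>2\<^sup>*) - diag(a) B z\<^sub>4\<close>,
  so \<open>\<Lambda>\<close> dominates \<open>Re (p\<^sup>H q)\<close>. For diagonal \<open>X\<close> the number \<open>h = a\<^sup>T X B y\<close> equals
  \<open>diag(X\<^sup>*)\<^sup>H diag(a) B y\<close>; replacing \<open>y\<close> by \<open>-y\<close>, \<open>j y\<close>, \<open>-j y\<close> turns \<open>Re h\<close> into
  \<open>-Re h\<close>, \<open>-Im h\<close>, \<open>Im h\<close>. Hence \<open>|Re h| \<le> \<rho>\<close> and \<open>|Im h| \<le> \<kappa>\<close>.
  Convexity holds because, with \<open>Z\<^sub>2\<close> and \<open>z\<^sub>4\<close> fixed, \<open>\<Lambda>\<close> is a squared norm of a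
  real-linear map plus a real-linear functional plus a constant.
\<close>

lemma power2_norm_vec_eq_sum: "(norm x)\<^sup>2 = (\<Sum>i\<in>UNIV. (norm (x $ i))\<^sup>2)"
  unfolding norm_vec_def L2_set_def by (simp add: sum_nonneg)

lemma complex_completed_square:
  fixes p q r :: complex
  shows "1/4 * (cmod (p + q))\<^sup>2 - 1/2 * Re (cnj r * (p - q)) + 1/4 * (cmod r)\<^sup>2
     = Re (cnj p * q) + 1/4 * (cmod (p - q - r))\<^sup>2"
  by (simp only: cmod_power2) (simp add: power2_eq_square algebra_simps)

lemma Lambda_completed_square:
  "Lambda a B Z1 Z2 z3 z4 = Re (herm_inner (diag_conj Z1) (diagB a B z3))
     + 1/4 * (norm (diag_conj Z1 - diagB a B z3 - (diag_conj Z2 - diagB a B z4)))\<^sup>2"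
proof -
  let ?p = "diag_conj Z1" and ?q = "diagB a B z3" and ?r = "diag_conj Z2 - diagB a B z4"
  have "Lambda a B Z1 Z2 z3 z4 = (\<Sum>i\<in>UNIV. 1/4 * (cmod (?p $ i + ?q $ i))\<^sup>2
      - 1/2 * Re (cnj (?r $ i) * (?p $ i - ?q $ i)) + 1/4 * (cmod (?r $ i))\<^sup>2)"
    unfolding Lambda_def power2_norm_vec_eq_sum herm_inner_def
    by (simp only: Re_sum sum_distrib_left sum_subtractf[symmetric] sum.distrib[symmetric]
        vector_add_component vector_minus_component)
  also have "\<dots> = (\<Sum>i\<in>UNIV. Re (cnj (?p $ i) * ?q $ i) + 1/4 * (cmod (?p $ i - ?q $ i - ?r $ i))\<^sup>2)"
    by (simp only: complex_completed_square)
  also have "\<dots> = Re (herm_inner ?p ?q) + 1/4 * (norm (?p - ?q - ?r))\<^sup>2"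
    unfolding power2_norm_vec_eq_sum herm_inner_def
    by (simp only: Re_sum sum_distrib_left sum.distrib vector_minus_component)
  finally show ?thesis .
qed

lemma Re_herm_inner_le_Lambda: "Re (herm_inner (diag_conj Z1) (diagB a B z3)) \<le> Lambda a B Z1 Z2 z3 z4"
  unfolding Lambda_completed_square by simp

lemma diag_matrix_vector_mult:
  assumes "is_diag X"
  shows "(X *v v) $ i = X $ i $ i * v $ i"
proof -
  have "(X *v v) $ i = (\<Sum>k\<in>UNIV. X $ i $ k * v $ k)"
    by (simp add: matrix_vector_mult_def)
  also have "\<dots> = (\<Sum>k\<in>UNIV. if k = i then X $ i $ i * v $ i else 0)"
    using assms unfolding is_diag_def by (intro sum.cong) auto
  finally show ?thesis by simp
qed

lemma aXBy_eq_herm_inner: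
  assumes "is_diag X"
  shows "aXBy a X B y = herm_inner (diag_conj X) (diagB a B y)"
  unfolding aXBy_def herm_inner_def diag_conj_def diagB_def
  by (simp add: matrix_vector_mul_assoc[symmetric] diag_matrix_vector_mult[OF assms]
      mult.commute mult.left_commute)

lemma diagB_uminus: "diagB a B (- z) = - diagB a B z"
  by (simp add: diagB_def vec_eq_iff matrix_vector_mult_def sum_negf)

lemma diagB_vector_smult: "diagB a B (c *s z) = c *s diagB a B z"
  by (simp add: diagB_def vec_eq_iff matrix_vector_mult_def sum_distrib_left mult.left_commute)

lemma herm_inner_uminus_right: "herm_inner u (- v) = - herm_inner u v"
  by (simp add: herm_inner_def sum_negf)

lemma herm_inner_vector_smult_right: "herm_inner u (c *s v) = c * herm_inner u v"
  by (simp add: herm_inner_def sum_distrib_left mult.left_commute)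

lemma cmod_power2_le:
  assumes "\<bar>Re z\<bar> \<le> \<rho>" and "\<bar>Im z\<bar> \<le> \<kappa>"
  shows "(cmod z)\<^sup>2 \<le> \<rho>\<^sup>2 + \<kappa>\<^sup>2"
proof -
  have "(Re z)\<^sup>2 \<le> \<rho>\<^sup>2" and "(Im z)\<^sup>2 \<le> \<kappa>\<^sup>2"
    using assms by (simp_all add: abs_le_square_iff[symmetric])
  then show ?thesis
    by (simp add: cmod_power2)
qed

lemma convex_on_power2_norm: "convex_on UNIV (\<lambda>x::'a::real_normed_vector. (norm x)\<^sup>2)"
  unfolding convex_on_def
proof (intro conjI convex_UNIV ballI allI impI)
  fix x y :: 'a and u v :: real
  assume uv: "0 \<le> u" "0 \<le> v" "u + v = 1"
  have "norm (u *\<^sub>R x + v *\<^sub>R y) \<le> u * norm x + v * norm y"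
    using norm_triangle_ineq[of "u *\<^sub>R x" "v *\<^sub>R y"] uv by simp
  then have "(norm (u *\<^sub>R x + v *\<^sub>R y))\<^sup>2 \<le> (u * norm x + v * norm y)\<^sup>2"
    by (intro power_mono) auto
  also have "\<dots> \<le> u * (norm x)\<^sup>2 + v * (norm y)\<^sup>2"
    using convex_power2 uv unfolding convex_on_def by simp
  finally show "(norm (u *\<^sub>R x + v *\<^sub>R y))\<^sup>2 \<le> u * (norm x)\<^sup>2 + v * (norm y)\<^sup>2" .
qed

lemma convex_on_linear_compose:
  assumes "convex_on UNIV h" and "linear f" and "convex S"
  shows "convex_on S (\<lambda>x. h (f x))"
  using assms by (simp add: convex_on_def linear_add linear_scale)

lemma linear_diag_conj: "linear diag_conj"
  by (intro linearI) (simp_all add: diag_conj_def vec_eq_iff)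

lemma linear_diagB: "linear (diagB a B)"
  by (intro linearI)
    (simp_all add: diagB_def vec_eq_iff matrix_vector_mult_def sum.distrib
      scaleR_sum_right[symmetric] distrib_left)

lemma linear_Re_herm_inner: "linear (\<lambda>v. Re (herm_inner u v))"
  by (intro linearI) (simp_all add: herm_inner_def sum.distrib algebra_simps Re_sum sum_distrib_left)

lemma convex_on_Lambda:
  assumes P: "linear P" and Q: "linear Q" and "convex S"
  shows "convex_on S (\<lambda>x. Lambda a B (P x) Z2 (Q x) z4)"
proof -
  let ?r = "diag_conj Z2 - diagB a B z4"
  let ?L = "\<lambda>x. diag_conj (P x) + diagB a B (Q x)"
  let ?l = "\<lambda>x. - (1/2 * Re (herm_inner ?r (diag_conj (P x) - diagB a B (Q x))))"
  note lin = P Q linear_diag_conj linear_diagB linear_Re_herm_inner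
  have "linear ?L" and "linear ?l"
    by (intro linearI;
        simp add: lin[THEN linear_add] lin[THEN linear_scale] algebra_simps
          linear_diff[OF linear_Re_herm_inner])+
  have "convex_on S (\<lambda>x. (norm (?L x))\<^sup>2)"
    by (rule convex_on_linear_compose[OF convex_on_power2_norm \<open>linear ?L\<close> \<open>convex S\<close>])
  then have "convex_on S (\<lambda>x. 1/4 * (norm (?L x))\<^sup>2)"
    by (intro convex_on_cmul) simp_all
  moreover have "convex_on S ?l"
    by (rule convex_on_linear_compose[OF _ \<open>linear ?l\<close> \<open>convex S\<close>])
      (simp add: convex_on_ident)
  moreover have "convex_on S (\<lambda>x. 1/4 * (norm ?r)\<^sup>2)"
    using \<open>convex S\<close> by (simp add: convex_on_const)
  ultimately have "convex_on S (\<lambda>x. 1/4 * (norm (?L x))\<^sup>2 + ?l x + 1/4 * (norm ?r)\<^sup>2)"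
    by (intro convex_on_add)
  then show ?thesis
    unfolding Lambda_def by simp
qed

lemma convex_is_diag_fst: "convex {p :: (complex ^ 'n ^ 'n) \<times> 'b::real_vector. is_diag (fst p)}"
  unfolding convex_def is_diag_def by simp

theorem lemma2:
  fixes a :: "complex ^ 'n" and B :: "complex ^ 'm ^ 'n"
    and X0 X :: "complex ^ 'n ^ 'n" and y0 y :: "complex ^ 'm"
    and \<rho> \<kappa> :: real
  assumes "is_diag X0" and "is_diag X"
    and "\<rho> \<ge> Lambda a B X X0 y y0"
    and "\<rho> \<ge> Lambda a B X X0 (- y) (- y0)"
    and "\<kappa> \<ge> Lambda a B X X0 (\<i> *s y) (\<i> *s y0)"
    and "\<kappa> \<ge> Lambda a B X X0 (- (\<i> *s y)) (- (\<i> *s y0))"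
  shows "(cmod (aXBy a X B y))\<^sup>2 \<le> \<rho>\<^sup>2 + \<kappa>\<^sup>2
    \<and> convex_on {p. is_diag (fst p)} (\<lambda>p. Lambda a B (fst p) X0 (snd p) y0)
    \<and> convex_on {p. is_diag (fst p)} (\<lambda>p. Lambda a B (fst p) X0 (- snd p) (- y0))
    \<and> convex_on {p. is_diag (fst p)} (\<lambda>p. Lambda a B (fst p) X0 (\<i> *s snd p) (\<i> *s y0))
    \<and> convex_on {p. is_diag (fst p)} (\<lambda>p. Lambda a B (fst p) X0 (- (\<i> *s snd p)) (- (\<i> *s y0)))"
proof -
  let ?h = "herm_inner (diag_conj X) (diagB a B y)"
  note bound = Re_herm_inner_le_Lambda[of X a B _ X0, THEN order_trans]
  have "Re ?h \<le> \<rho>" and "- Re ?h \<le> \<rho>" and "- Im ?h \<le> \<kappa>" and "Im ?h \<le> \<kappa>"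
    using bound[OF assms(3)] bound[OF assms(4)] bound[OF assms(5)] bound[OF assms(6)]
    by (simp_all add: diagB_uminus diagB_vector_smult herm_inner_uminus_right
        herm_inner_vector_smult_right)
  then have "\<bar>Re ?h\<bar> \<le> \<rho>" and "\<bar>Im ?h\<bar> \<le> \<kappa>"
    by linarith+
  then have "(cmod (aXBy a X B y))\<^sup>2 \<le> \<rho>\<^sup>2 + \<kappa>\<^sup>2"
    unfolding aXBy_eq_herm_inner[OF assms(2)] by (rule cmod_power2_le)
  moreover have "linear (fst :: (complex ^ 'n ^ 'n) \<times> (complex ^ 'm) \<Rightarrow> _)"
    and "linear (snd :: (complex ^ 'n ^ 'n) \<times> (complex ^ 'm) \<Rightarrow> _)"
    and "linear (\<lambda>p :: (complex ^ 'n ^ 'n) \<times> (complex ^ 'm). - snd p)"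
    and "linear (\<lambda>p :: (complex ^ 'n ^ 'n) \<times> (complex ^ 'm). \<i> *s snd p)"
    and "linear (\<lambda>p :: (complex ^ 'n ^ 'n) \<times> (complex ^ 'm). - (\<i> *s snd p))"
    by (intro linearI; simp add: vec_eq_iff algebra_simps)+
  ultimately show ?thesis
    by (auto intro!: convex_on_Lambda convex_is_diag_fst)
qed

end
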